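(* Let $(\mathfrak S_A,\mathfrak E_A,\epsilon^{\mathfrak S_A})$ and $(\mathfrak S_B,\mathfrak E_B,\epsilon^{\mathfrak S_B})$ be States/Effects Chu spaces, $\Phi\in\mathfrak S_A\widetilde{\otimes}\mathfrak S_B$ and $\mathfrak l_A\in\mathfrak E_A$ with $\Phi(\mathfrak l_A,\mathfrak Y_{\mathfrak E_B})=Y$. Then for every $\mathfrak l_B\in\mathfrak E_B$, $$(\Phi(\mathfrak l_A,\mathfrak l_B),\Phi(\mathfrak l_A,\overline{\mathfrak l_B}))\in\{(Y,N),(N,Y),(\bot,\bot)\}.$$
   Context: The boolean domain is $\mathfrak{B}=\{Y,N,\bot\}$, ordered by $u\le v$ iff $u=\bot$ or $u=v$; nonempty infima $\bigwedge$: $Y$ (resp. $N$) if all members are $Y$ (resp. $N$), else $\bot$. Product $\bullet$: $x\bullet Y=x$, $x\bullet N=N$, $\bot\bullet\bot=\bot$ (commutative); involution $\overline{\bot}=\bot$, $\overline{Y}=N$, $\overline{N}=Y$. A space of states is a poset $(\mathfrak S,\sqsubseteq)$ with bottom $\bot_{\mathfrak S}$ in which every nonempty subset has an infimum. The natural space of effects $\mathfrak E_{\mathfrak S}$ consists of formal symbols $\mathfrak l_{(\sigma,\sigma')}$ ($\sigma,\sigma'$ with no common upper bound), $\mathfrak l_{(\sigma,\cdot)}$, $\mathfrak l_{(\cdot,\sigma)}$, $\mathfrak l_{(\cdot,\cdot)}$, with evaluation $\epsilon_{\mathfrak l_{(a,b)}}(\sigma)=Y$ if $a\sqsubseteq\sigma$,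 $N$ if $b\sqsubseteq\sigma$, $\bot$ otherwise ("$\cdot\sqsubseteq\sigma$" false), ordered by pointwise comparison of evaluations (nonempty infima exist and are pointwise). $\overline{\mathfrak l_{(a,b)}}=\mathfrak l_{(b,a)}$, $\mathfrak Y_{\mathfrak E}=\mathfrak l_{(\bot_{\mathfrak S},\cdot)}$, $\bot_{\mathfrak E}=\mathfrak l_{(\cdot,\cdot)}$. A States/Effects Chu space $(\mathfrak S,\mathfrak E,\epsilon)$: $\mathfrak E\subseteq\mathfrak E_{\mathfrak S}$ such that (i) each $\sigma\ne\bot_{\mathfrak S}$ has some $\sigma'\ne\bot_{\mathfrak S}$ with $\mathfrak l_{(\sigma,\sigma')}\in\mathfrak E$; (ii) $\mathfrak E$ is closed under nonempty infima of $\mathfrak E_{\mathfrak S}$; (iii) closed under bar; (iv) contains $\mathfrak Y_{\mathfrak E},\bot_{\mathfrak E}$. The pure tensor $\sigma_A\widetilde{\otimes}\sigma_B$ is the map $\mathfrak E_A\times\mathfrak E_B\to\mathfrak B$, $(\mathfrak l_A,\mathfrak l_B)\mapsto\epsilon^{\mathfrak S_A}_{\mathfrak l_A}(\sigma_A)\bullet\epsilon^{\mathfrak S_B}_{\mathfrak l_B}(\sigma_B)$; the minimal tensor product $\mathfrak S_A\widetilde{\otimes}\mathfrak S_B$ is the set of pointwise infima of nonempty families of pure tensors. *)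

theory Defs
  imports Main
begin

datatype B3 = Y | N | Bot

definition B3_le :: "B3 \<Rightarrow> B3 \<Rightarrow> bool" where
  "B3_le u v \<longleftrightarrow> u = Bot \<or> u = v"

definition B3_Inf :: "B3 set \<Rightarrow> B3" where
  "B3_Inf X = (if X \<subseteq> {Y} then Y else if X \<subseteq> {N} then N else Bot)"

fun B3_prod :: "B3 \<Rightarrow> B3 \<Rightarrow> B3" (infixl "\<bullet>\<^sub>B" 70) where
  "x \<bullet>\<^sub>B Y = x"
| "x \<bullet>\<^sub>B N = N"
| "Y \<bullet>\<^sub>B Bot = Bot"
| "N \<bullet>\<^sub>B Bot = N"
| "Bot \<bullet>\<^sub>B Bot = Bot"

fun B3_bar :: "B3 \<Rightarrow> B3" where
  "B3_bar Y = N"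
| "B3_bar N = Y"
| "B3_bar Bot = Bot"

definition is_inf :: "'a set \<Rightarrow> ('a \<Rightarrow> 'a \<Rightarrow> bool) \<Rightarrow> 'a set \<Rightarrow> 'a \<Rightarrow> bool" where
  "is_inf S le X m \<longleftrightarrow> m \<in> S \<and> (\<forall>x\<in>X. le m x) \<and>
     (\<forall>m'\<in>S. (\<forall>x\<in>X. le m' x) \<longrightarrow> le m' m)"

definition space_of_states :: "'a set \<Rightarrow> ('a \<Rightarrow> 'a \<Rightarrow> bool) \<Rightarrow> 'a \<Rightarrow> bool" where
  "space_of_states S le bt \<longleftrightarrow>
     (\<forall>x\<in>S. le x x) \<and>
     (\<forall>x\<in>S. \<forall>y\<in>S. le x y \<and> le y x \<longrightarrow> x = y) \<and>
     (\<forall>x\<in>S. \<forall>y\<in>S. \<forall>z\<in>S. le x y \<and> le y z \<longrightarrow> le x z) \<and>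
     bt \<in> S \<and> (\<forall>x\<in>S. le bt x) \<and>
     (\<forall>X. X \<subseteq> S \<and> X \<noteq> {} \<longrightarrow> (\<exists>m. is_inf S le X m))"

text \<open>The formal symbol l_(a,b) is the pair (a,b), where None stands for the dot.\<close>
type_synonym 'a effect = "'a option \<times> 'a option"

definition opt_le :: "('a \<Rightarrow> 'a \<Rightarrow> bool) \<Rightarrow> 'a option \<Rightarrow> 'a \<Rightarrow> bool" where
  "opt_le le a s = (case a of None \<Rightarrow> False | Some x \<Rightarrow> le x s)"

definition nat_effects :: "'a set \<Rightarrow> ('a \<Rightarrow> 'a \<Rightarrow> bool) \<Rightarrow> 'a effect set" where
  "nat_effects S le = {(a, b). set_option a \<subseteq> S \<and> set_option b \<subseteq> S \<and>
     (\<forall>x y. a = Some x \<and> b = Some y \<longrightarrow> \<not> (\<exists>u\<in>S. le x u \<and> le y u))}"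

definition eval :: "('a \<Rightarrow> 'a \<Rightarrow> bool) \<Rightarrow> 'a effect \<Rightarrow> 'a \<Rightarrow> B3" where
  "eval le l s = (if opt_le le (fst l) s then Y else if opt_le le (snd l) s then N else Bot)"

definition eff_bar :: "'a effect \<Rightarrow> 'a effect" where
  "eff_bar l = (snd l, fst l)"

definition eff_Y :: "'a \<Rightarrow> 'a effect" where
  "eff_Y bt = (Some bt, None)"

definition eff_bot :: "'a effect" where
  "eff_bot = (None, None)"

definition chu_space :: "'a set \<Rightarrow> ('a \<Rightarrow> 'a \<Rightarrow> bool) \<Rightarrow> 'a \<Rightarrow> 'a effect set \<Rightarrow> bool" where
  "chu_space S le bt E \<longleftrightarrow>
     space_of_states S le bt \<and>
     E \<subseteq> nat_effects S le \<and>
     (\<forall>s\<in>S. s \<noteq> bt \<longrightarrow> (\<exists>s'\<in>S. s' \<noteq> bt \<and> (Some s, Some s') \<in> E)) \<and>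
     (\<forall>F. F \<subseteq> E \<and> F \<noteq> {} \<longrightarrow>
        (\<exists>l\<in>E. \<forall>s\<in>S. eval le l s = B3_Inf ((\<lambda>f. eval le f s) ` F))) \<and>
     (\<forall>l\<in>E. eff_bar l \<in> E) \<and>
     eff_Y bt \<in> E \<and> eff_bot \<in> E"

definition pure_tensor ::
  "('a \<Rightarrow> 'a \<Rightarrow> bool) \<Rightarrow> ('b \<Rightarrow> 'b \<Rightarrow> bool) \<Rightarrow> 'a \<Rightarrow> 'b \<Rightarrow> 'a effect \<times> 'b effect \<Rightarrow> B3" where
  "pure_tensor leA leB sA sB = (\<lambda>(lA, lB). eval leA lA sA \<bullet>\<^sub>B eval leB lB sB)"

definition min_tensor ::
  "'a set \<Rightarrow> ('a \<Rightarrow> 'a \<Rightarrow> bool) \<Rightarrow> 'a effect set \<Rightarrow>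
   'b set \<Rightarrow> ('b \<Rightarrow> 'b \<Rightarrow> bool) \<Rightarrow> 'b effect set \<Rightarrow>
   ('a effect \<times> 'b effect \<Rightarrow> B3) \<Rightarrow> bool" where
  "min_tensor SA leA EA SB leB EB Phi \<longleftrightarrow>
     (\<exists>T. T \<subseteq> SA \<times> SB \<and> T \<noteq> {} \<and>
        (\<forall>lA\<in>EA. \<forall>lB\<in>EB.
           Phi (lA, lB) = B3_Inf ((\<lambda>(sA, sB). pure_tensor leA leB sA sB (lA, lB)) ` T)))"

end

theory Submission
  imports Defs
begin

text \<open>If \<open>\<Phi>(l\<^sub>A, Y\<^sub>E) = Y\<close>, every pure tensor \<open>\<sigma>\<^sub>A \<otimes> \<sigma>\<^sub>B\<close> of a family with infimum \<open>\<Phi>\<close>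
  has \<open>\<epsilon>\<^sub>l\<^sub>A(\<sigma>\<^sub>A) = Y\<close>, since an infimum is \<open>Y\<close> only when all its members are. As \<open>Y\<close>
  is the unit of the product, \<open>\<Phi>(l\<^sub>A, -)\<close> is then the pointwise infimum of the evaluations at
  the states \<open>\<sigma>\<^sub>B\<close> of the family. Evaluation commutes with the bar involution, and so do
  nonempty infima in the boolean domain; hence \<open>\<Phi>(l\<^sub>A, bar l\<^sub>B) = bar \<Phi>(l\<^sub>A, l\<^sub>B)\<close>.\<close>

lemma B3_prod_Y_left [simp]: "Y \<bullet>\<^sub>B x = x"
  by (cases x) auto

lemma B3_Inf_eq_Y_iff: "B3_Inf X = Y \<longleftrightarrow> X \<subseteq> {Y}"
  unfolding B3_Inf_def by auto

lemma B3_Inf_image_bar: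
  assumes "X \<noteq> {}"
  shows "B3_Inf (B3_bar ` X) = B3_bar (B3_Inf X)"
proof -
  have "B3_bar ` X \<subseteq> {Y} \<longleftrightarrow> X \<subseteq> {N}" "B3_bar ` X \<subseteq> {N} \<longleftrightarrow> X \<subseteq> {Y}"
    by (auto elim: B3_bar.elims)
  moreover have "\<not> (X \<subseteq> {Y} \<and> X \<subseteq> {N})"
    using assms by auto
  ultimately show ?thesis
    unfolding B3_Inf_def by auto
qed

lemma B3_pair_bar_cases: "(x, B3_bar x) \<in> {(Y, N), (N, Y), (Bot, Bot)}"
  by (cases x) auto

lemma eval_eff_bar:
  assumes "l \<in> nat_effects S le" and "s \<in> S"
  shows "eval le (eff_bar l) s = B3_bar (eval le l s)"
  using assms unfolding nat_effects_def eval_def eff_bar_def opt_le_def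
  by (cases l) (auto split: option.splits)

lemma eval_eff_Y:
  assumes "space_of_states S le bt" and "s \<in> S"
  shows "eval le (eff_Y bt) s = Y"
  using assms unfolding space_of_states_def eval_def eff_Y_def opt_le_def by auto

lemma pure_tensor_eff_Y_right:
  assumes "space_of_states SB leB botB" and "sB \<in> SB"
  shows "pure_tensor leA leB sA sB (lA, eff_Y botB) = eval leA lA sA"
  using eval_eff_Y[OF assms] unfolding pure_tensor_def by simp

definition family_tensor ::
  "('a \<Rightarrow> 'a \<Rightarrow> bool) \<Rightarrow> ('b \<Rightarrow> 'b \<Rightarrow> bool) \<Rightarrow> ('a \<times> 'b) set \<Rightarrow> 'a effect \<times> 'b effect \<Rightarrow> B3" where
  "family_tensor leA leB T l = B3_Inf ((\<lambda>(sA, sB). pure_tensor leA leB sA sB l) ` T)"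

lemma min_tensor_iff_family_tensor:
  "min_tensor SA leA EA SB leB EB Phi \<longleftrightarrow>
     (\<exists>T. T \<subseteq> SA \<times> SB \<and> T \<noteq> {} \<and>
        (\<forall>lA\<in>EA. \<forall>lB\<in>EB. Phi (lA, lB) = family_tensor leA leB T (lA, lB)))"
  unfolding min_tensor_def family_tensor_def ..

lemma family_tensor_eq_Y_iff:
  "family_tensor leA leB T l = Y \<longleftrightarrow> (\<forall>(sA, sB) \<in> T. pure_tensor leA leB sA sB l = Y)"
  unfolding family_tensor_def B3_Inf_eq_Y_iff image_subset_iff by (simp add: split_def)

lemma family_tensor_eff_Y_eq_Y_iff:
  assumes "space_of_states SB leB botB" and "T \<subseteq> SA \<times> SB"
  shows "family_tensor leA leB T (lA, eff_Y botB) = Y \<longleftrightarrow> (\<forall>(sA, sB) \<in> T. eval leA lA sA = Y)"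
  unfolding family_tensor_eq_Y_iff
proof (rule ball_cong[OF refl], clarify)
  fix sA sB assume "(sA, sB) \<in> T"
  then have "sB \<in> SB" using assms(2) by blast
  then show "pure_tensor leA leB sA sB (lA, eff_Y botB) = Y \<longleftrightarrow> eval leA lA sA = Y"
    by (simp add: pure_tensor_eff_Y_right[OF assms(1)])
qed

lemma family_tensor_eq_B3_Inf_eval_right:
  assumes "\<forall>(sA, sB) \<in> T. eval leA lA sA = Y"
  shows "family_tensor leA leB T (lA, lB) = B3_Inf ((\<lambda>(sA, sB). eval leB lB sB) ` T)"
  unfolding family_tensor_def
proof (rule arg_cong[where f = B3_Inf], rule image_cong[OF refl], clarify)
  fix sA sB assume "(sA, sB) \<in> T"
  then have "eval leA lA sA = Y" using assms by blast
  then show "pure_tensor leA leB sA sB (lA, lB) = eval leB lB sB"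
    by (simp add: pure_tensor_def)
qed

lemma family_tensor_eff_bar:
  assumes "T \<subseteq> SA \<times> SB" and "T \<noteq> {}" and "lB \<in> nat_effects SB leB"
    and "\<forall>(sA, sB) \<in> T. eval leA lA sA = Y"
  shows "family_tensor leA leB T (lA, eff_bar lB) = B3_bar (family_tensor leA leB T (lA, lB))"
proof -
  have "(\<lambda>(sA, sB). eval leB (eff_bar lB) sB) ` T = B3_bar ` (\<lambda>(sA, sB). eval leB lB sB) ` T"
    unfolding image_image
  proof (rule image_cong[OF refl], clarify)
    fix sA sB assume "(sA, sB) \<in> T"
    then have "sB \<in> SB" using assms(1) by blast
    then show "eval leB (eff_bar lB) sB = B3_bar (eval leB lB sB)"
      by (rule eval_eff_bar[OF assms(3)])
  qed
  then show ?thesis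
    using B3_Inf_image_bar[of "(\<lambda>(sA, sB). eval leB lB sB) ` T"] assms(2)
    by (simp add: family_tensor_eq_B3_Inf_eval_right[OF assms(4)])
qed

theorem mainTheorem19:
  fixes SA :: "'a set" and leA :: "'a \<Rightarrow> 'a \<Rightarrow> bool" and botA :: 'a and EA :: "'a effect set"
    and SB :: "'b set" and leB :: "'b \<Rightarrow> 'b \<Rightarrow> bool" and botB :: 'b and EB :: "'b effect set"
    and Phi :: "'a effect \<times> 'b effect \<Rightarrow> B3"
  assumes "chu_space SA leA botA EA"
    and "chu_space SB leB botB EB"
    and "min_tensor SA leA EA SB leB EB Phi"
    and "lA \<in> EA"
    and "Phi (lA, eff_Y botB) = Y"
  shows "\<forall>lB\<in>EB. (Phi (lA, lB), Phi (lA, eff_bar lB)) \<in> {(Y, N), (N, Y), (Bot, Bot)}"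
proof
  fix lB assume lB: "lB \<in> EB"
  obtain T where T: "T \<subseteq> SA \<times> SB" "T \<noteq> {}"
    and Phi: "\<And>lA lB. lA \<in> EA \<Longrightarrow> lB \<in> EB \<Longrightarrow> Phi (lA, lB) = family_tensor leA leB T (lA, lB)"
    using assms(3) unfolding min_tensor_iff_family_tensor by blast
  have states_B: "space_of_states SB leB botB" and effects_B: "EB \<subseteq> nat_effects SB leB"
    and Y_B: "eff_Y botB \<in> EB" and bar_B: "eff_bar lB \<in> EB"
    using assms(2) lB unfolding chu_space_def by simp_all
  have "\<forall>(sA, sB) \<in> T. eval leA lA sA = Y"
    using assms(5) Phi[OF assms(4) Y_B] family_tensor_eff_Y_eq_Y_iff[OF states_B T(1)] by simp
  moreover have "lB \<in> nat_effects SB leB"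
    using lB effects_B by blast
  ultimately have "Phi (lA, eff_bar lB) = B3_bar (Phi (lA, lB))"
    using family_tensor_eff_bar[OF T] Phi[OF assms(4) lB] Phi[OF assms(4) bar_B] by simp
  then show "(Phi (lA, lB), Phi (lA, eff_bar lB)) \<in> {(Y, N), (N, Y), (Bot, Bot)}"
    using B3_pair_bar_cases by simp
qed

end
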